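(* Let $(X,E,\ell)$ be a weighted tree, with its path metric. Then $X$ is of negative type, its weight $w\colon X\to\mathbb{R}$ (the unique solution of $\sum_{y\in X}e^{-d(x,y)}w(y)=1$ for all $x\in X$) is $$w(x)=\sum_{e\ni x}\frac{1}{1+e^{-\ell(e)}}-(\deg x-1),\qquad x\in X,$$ and its magnitude is $$|X|=\sum_{x\in X}w(x)=1+\sum_{e\in E}\tanh\Big(\frac{\ell(e)}{2}\Big).$$
   Context: A weighted tree is a triple $(X,E,\ell)$ where $(X,E)$ is a finite simple undirected graph that is a tree (connected, no cycles), and $\ell\colon E\to(0,\infty)$ assigns a length to each edge. It is a metric space on the vertex set $X$ with $d(x,y)$ the sum of the lengths of the edges along the unique simple path from $x$ to $y$. $\deg x$ is the number of neighbours of $x$; the sum $\sum_{e\ni x}$ ranges over edges containing $x$. A metric space is of negative type if $(X,\sqrt d)$ embeds isometrically into a Hilbert space. *)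

theory Defs
  imports Complex_Main
begin

definition is_walk :: "'a set set \<Rightarrow> 'a list \<Rightarrow> bool" where
  "is_walk E ps \<longleftrightarrow> ps \<noteq> [] \<and>
     (\<forall>i. Suc i < length ps \<longrightarrow> {ps ! i, ps ! Suc i} \<in> E)"

definition is_path :: "'a set set \<Rightarrow> 'a list \<Rightarrow> 'a \<Rightarrow> 'a \<Rightarrow> bool" where
  "is_path E ps x y \<longleftrightarrow> is_walk E ps \<and> distinct ps \<and> hd ps = x \<and> last ps = y"

definition path_length :: "('a set \<Rightarrow> real) \<Rightarrow> 'a list \<Rightarrow> real" where
  "path_length l ps = (\<Sum>i<length ps - 1. l {ps ! i, ps ! Suc i})"

definition has_cycle :: "'a set set \<Rightarrow> bool" where
  "has_cycle E \<longleftrightarrow> (\<exists>cs. length cs \<ge> 3 \<and> distinct cs \<and> is_walk E cs \<and> {last cs, hd cs} \<in> E)"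

definition weighted_tree :: "'a set \<Rightarrow> 'a set set \<Rightarrow> ('a set \<Rightarrow> real) \<Rightarrow> bool" where
  "weighted_tree X E l \<longleftrightarrow>
     finite X \<and> X \<noteq> {} \<and>
     (\<forall>e\<in>E. \<exists>x y. x \<noteq> y \<and> x \<in> X \<and> y \<in> X \<and> e = {x, y}) \<and>
     (\<forall>e\<in>E. l e > 0) \<and>
     (\<forall>x\<in>X. \<forall>y\<in>X. \<exists>ps. is_path E ps x y) \<and>
     \<not> has_cycle E"

definition tree_dist :: "'a set set \<Rightarrow> ('a set \<Rightarrow> real) \<Rightarrow> 'a \<Rightarrow> 'a \<Rightarrow> real" where
  "tree_dist E l x y = (THE r. \<exists>ps. is_path E ps x y \<and> r = path_length l ps)"

definition degree :: "'a set set \<Rightarrow> 'a \<Rightarrow> nat" where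
  "degree E x = card {e \<in> E. x \<in> e}"

text \<open>Negative type: (X, sqrt d) embeds isometrically into a Hilbert space.
Since X is finite, the image spans a finite-dimensional subspace; we take the
Hilbert space to be the Euclidean space of real functions on X (coordinates
indexed by X with the standard l2 norm).\<close>
definition negative_type :: "'a set \<Rightarrow> ('a \<Rightarrow> 'a \<Rightarrow> real) \<Rightarrow> bool" where
  "negative_type X d \<longleftrightarrow>
     (\<exists>\<phi> :: 'a \<Rightarrow> 'a \<Rightarrow> real. \<forall>x\<in>X. \<forall>y\<in>X.
        sqrt (d x y) = sqrt (\<Sum>z\<in>X. (\<phi> x z - \<phi> y z)\<^sup>2))"

definition is_weighting :: "'a set \<Rightarrow> ('a \<Rightarrow> 'a \<Rightarrow> real) \<Rightarrow> ('a \<Rightarrow> real) \<Rightarrow> bool" where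
  "is_weighting X d w \<longleftrightarrow> (\<forall>x\<in>X. (\<Sum>y\<in>X. exp (- d x y) * w y) = 1)"

end

theory Submission
  imports Defs
begin

(* A tree with at least two vertices has a leaf a, with neighbour b say, and removing a leaves a
   tree in which all distances are unchanged, while d(a, y) = l(ab) + d(b, y).  So every tree is
   built from a point by attaching pendant points, and all claims are inherited along such
   one-point extensions.  With q = exp(-l(ab)): a weighting extends by w(a) = 1/(1+q) and
   w(b) := w(b) + 1/(1+q) - 1, which adds 2/(1+q) - 1 = tanh(l(ab)/2) to the magnitude; the rows
   of a and b of the similarity matrix force (1 - q^2) v(a) = 0 for any v in its kernel, so the
   matrix stays nonsingular; and an embedding of (X, d) into l^2 with squared distances extends
   by one new coordinate, equal to sqrt(l(ab)) at a and 0 elsewhere. *)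

section \<open>Pendant extensions of finite metric spaces\<close>

definition similarity_nonsingular :: "'a set \<Rightarrow> ('a \<Rightarrow> 'a \<Rightarrow> real) \<Rightarrow> bool" where
  "similarity_nonsingular X d \<longleftrightarrow>
     (\<forall>v. (\<forall>x\<in>X. (\<Sum>y\<in>X. exp (- d x y) * v y) = 0) \<longrightarrow> (\<forall>x\<in>X. v x = 0))"

definition l2_squared_embeddable :: "'a set \<Rightarrow> ('a \<Rightarrow> 'a \<Rightarrow> real) \<Rightarrow> bool" where
  "l2_squared_embeddable X d \<longleftrightarrow>
     (\<exists>\<phi> :: 'a \<Rightarrow> 'a \<Rightarrow> real. \<forall>x\<in>X. \<forall>y\<in>X. d x y = (\<Sum>z\<in>X. (\<phi> x z - \<phi> y z)\<^sup>2))"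

definition pendant_weight :: "('a \<Rightarrow> real) \<Rightarrow> 'a \<Rightarrow> 'a \<Rightarrow> real \<Rightarrow> 'a \<Rightarrow> real" where
  "pendant_weight w a b L y =
     (if y = a then 1 / (1 + exp (- L)) else if y = b then w b + 1 / (1 + exp (- L)) - 1 else w y)"

lemma is_weighting_cong:
  assumes "is_weighting X d w" and "\<And>x y. x \<in> X \<Longrightarrow> y \<in> X \<Longrightarrow> d x y = d' x y"
  shows "is_weighting X d' w"
  using assms unfolding is_weighting_def by (simp cong: sum.cong)

lemma similarity_nonsingular_cong:
  assumes "similarity_nonsingular X d" and "\<And>x y. x \<in> X \<Longrightarrow> y \<in> X \<Longrightarrow> d x y = d' x y"
  shows "similarity_nonsingular X d'"
  using assms unfolding similarity_nonsingular_def by (simp cong: sum.cong)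

lemma l2_squared_embeddable_cong:
  assumes "l2_squared_embeddable X d" and "\<And>x y. x \<in> X \<Longrightarrow> y \<in> X \<Longrightarrow> d x y = d' x y"
  shows "l2_squared_embeddable X d'"
  using assms unfolding l2_squared_embeddable_def by auto

lemma weighting_unique:
  assumes "similarity_nonsingular X d" "is_weighting X d v" "is_weighting X d w"
  shows "\<forall>x\<in>X. v x = w x"
proof -
  have "(\<Sum>y\<in>X. exp (- d x y) * (v y - w y)) = 0" if "x \<in> X" for x
    using assms(2,3) that
    by (simp add: is_weighting_def right_diff_distrib sum_subtractf)
  then show ?thesis
    using assms(1) unfolding similarity_nonsingular_def by fastforce
qed

lemma negative_type_if_l2_squared_embeddable:
  "l2_squared_embeddable X d \<Longrightarrow> negative_type X d"
  unfolding l2_squared_embeddable_def negative_type_def by auto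

lemma sum_add_delta:
  fixes g w :: "'a \<Rightarrow> real"
  assumes "finite X" "b \<in> X"
  shows "(\<Sum>y\<in>X. g y * (w y + (if y = b then c else 0))) = (\<Sum>y\<in>X. g y * w y) + g b * c"
  using assms by (simp add: distrib_left sum.distrib if_distrib[of "(*) _"] cong: if_cong)

locale pendant_point =
  fixes X :: "'a set" and d :: "'a \<Rightarrow> 'a \<Rightarrow> real" and a b :: 'a and L :: real
  assumes finite: "finite X" and a_notin: "a \<notin> X" and b_in: "b \<in> X"
    and dist_aa: "d a a = 0" and dist_bb: "d b b = 0"
    and dist_from_a: "y \<in> X \<Longrightarrow> d a y = L + d b y"
    and dist_to_a: "y \<in> X \<Longrightarrow> d y a = d y b + L"
begin

lemma sum_insert_a: "(\<Sum>y\<in>insert a X. f y) = f a + (\<Sum>y\<in>X. f y)"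
  using finite a_notin by simp

lemma pendant_weight_on_X:
  "y \<in> X \<Longrightarrow> pendant_weight w a b L y = w y + (if y = b then 1 / (1 + exp (- L)) - 1 else 0)"
  using a_notin by (auto simp: pendant_weight_def)

lemma weighting_insert:
  assumes "is_weighting X d w"
  shows "is_weighting (insert a X) d (pendant_weight w a b L)"
  unfolding is_weighting_def
proof
  define q where "q = exp (- L)"
  define p where "p = 1 / (1 + q)"
  have "1 + q > 0"
    by (simp add: q_def add_pos_pos)
  then have p_q: "p * (1 + q) = 1"
    by (simp add: p_def)
  let ?w' = "pendant_weight w a b L"
  have w'_a: "?w' a = p"
    by (simp add: pendant_weight_def p_def q_def)
  have sum_X: "(\<Sum>y\<in>X. exp (- d x y) * ?w' y) = 1 + exp (- d x b) * (p - 1)" if "x \<in> X" for x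
    using assms that finite b_in
    by (simp add: pendant_weight_on_X sum_add_delta is_weighting_def p_def q_def cong: sum.cong)
  fix x assume "x \<in> insert a X"
  then consider "x = a" | "x \<in> X" by blast
  then show "(\<Sum>y\<in>insert a X. exp (- d x y) * ?w' y) = 1"
  proof cases
    case 1
    have "(\<Sum>y\<in>X. exp (- d a y) * ?w' y) = q * (\<Sum>y\<in>X. exp (- d b y) * ?w' y)"
      by (simp add: dist_from_a q_def sum_distrib_left mult.assoc[symmetric] exp_add[symmetric] cong: sum.cong)
    then have "(\<Sum>y\<in>insert a X. exp (- d x y) * ?w' y) = p * (1 + q)"
      using 1 sum_X[OF b_in] by (simp add: sum_insert_a dist_aa dist_bb w'_a algebra_simps)
    then show ?thesis using p_q by simp
  next
    case 2
    have "exp (- d x a) * ?w' a = exp (- d x b) * q * p"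
      using 2 by (simp add: dist_to_a w'_a q_def mult_exp_exp)
    then have "(\<Sum>y\<in>insert a X. exp (- d x y) * ?w' y) = 1 + exp (- d x b) * (p * (1 + q) - 1)"
      using sum_X[OF 2] by (simp add: sum_insert_a algebra_simps)
    then show ?thesis using p_q by simp
  qed
qed

lemma magnitude_insert:
  "(\<Sum>y\<in>insert a X. pendant_weight w a b L y) = (\<Sum>y\<in>X. w y) + tanh (L / 2)"
proof -
  have "(\<Sum>y\<in>X. pendant_weight w a b L y) = (\<Sum>y\<in>X. w y) + (1 / (1 + exp (- L)) - 1)"
    using sum_add_delta[OF finite b_in, of "\<lambda>_. 1"] by (simp add: pendant_weight_on_X cong: sum.cong)
  moreover have "tanh (L / 2) = 2 / (1 + exp (- L)) - 1"
  proof -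
    have "1 + exp (- L) > 0" by (simp add: add_pos_pos)
    then show ?thesis unfolding tanh_real_altdef by (simp add: field_simps)
  qed
  ultimately show ?thesis by (simp add: sum_insert_a pendant_weight_def)
qed

lemma similarity_nonsingular_insert:
  assumes "L \<noteq> 0" and "similarity_nonsingular X d"
  shows "similarity_nonsingular (insert a X) d"
  unfolding similarity_nonsingular_def
proof (intro allI impI)
  fix v assume kernel: "\<forall>x\<in>insert a X. (\<Sum>y\<in>insert a X. exp (- d x y) * v y) = 0"
  define q where "q = exp (- L)"
  define S where "S = (\<Sum>y\<in>X. exp (- d b y) * v y)"
  have "(\<Sum>y\<in>X. exp (- d a y) * v y) = q * S"
    by (simp add: S_def dist_from_a q_def sum_distrib_left mult.assoc[symmetric] exp_add[symmetric] cong: sum.cong)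
  then have row_a: "v a + q * S = 0"
    using kernel by (simp add: sum_insert_a dist_aa)
  have "(\<Sum>y\<in>insert a X. exp (- d b y) * v y) = 0"
    using kernel b_in by blast
  then have row_b: "q * v a + S = 0"
    by (simp add: sum_insert_a dist_to_a[OF b_in] dist_bb q_def S_def)
  from row_b have "S = - (q * v a)"
    by (simp add: eq_neg_iff_add_eq_0 add.commute)
  with row_a have "(1 - q\<^sup>2) * v a = 0"
    by (simp add: power2_eq_square algebra_simps)
  moreover have "q\<^sup>2 \<noteq> 1"
    using assms(1) by (simp add: q_def power2_eq_square mult_exp_exp)
  ultimately have va: "v a = 0" by simp
  have "\<forall>x\<in>X. (\<Sum>y\<in>X. exp (- d x y) * v y) = 0"
    using kernel va by (simp add: sum_insert_a)
  then show "\<forall>x\<in>insert a X. v x = 0"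
    using assms(2) va unfolding similarity_nonsingular_def by blast
qed

lemma l2_squared_embeddable_insert:
  assumes "L \<ge> 0" and "l2_squared_embeddable X d"
  shows "l2_squared_embeddable (insert a X) d"
proof -
  obtain \<phi> where \<phi>: "\<forall>x\<in>X. \<forall>y\<in>X. d x y = (\<Sum>z\<in>X. (\<phi> x z - \<phi> y z)\<^sup>2)"
    using assms(2) unfolding l2_squared_embeddable_def by blast
  define r where "r x = (if x = a then b else x)" for x
  define \<psi> where "\<psi> x z = (if z = a then (if x = a then sqrt L else 0) else \<phi> (r x) z)" for x z
  have r_in: "r x \<in> X" if "x \<in> insert a X" for x
    using that b_in by (auto simp: r_def)
  have \<psi>_X: "\<psi> x z = \<phi> (r x) z" if "z \<in> X" for x z
    using that a_notin by (auto simp: \<psi>_def)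
  have "(\<Sum>z\<in>insert a X. (\<psi> x z - \<psi> y z)\<^sup>2) = (\<psi> x a - \<psi> y a)\<^sup>2 + d (r x) (r y)"
    if "x \<in> insert a X" "y \<in> insert a X" for x y
    using \<phi> r_in[OF that(1)] r_in[OF that(2)] by (simp add: sum_insert_a \<psi>_X cong: sum.cong)
  then have "d x y = (\<Sum>z\<in>insert a X. (\<psi> x z - \<psi> y z)\<^sup>2)"
    if "x \<in> insert a X" "y \<in> insert a X" for x y
    using that assms(1) a_notin by (auto simp: \<psi>_def r_def dist_aa dist_bb dist_from_a dist_to_a)
  then show ?thesis unfolding l2_squared_embeddable_def by blast
qed

end

section \<open>Walks and paths\<close>

lemma is_walk_edge: "is_walk E ps \<Longrightarrow> Suc i < length ps \<Longrightarrow> {ps ! i, ps ! Suc i} \<in> E"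
  by (simp add: is_walk_def)

lemma is_walk_Cons_Cons: "is_walk E (x # y # ys) \<longleftrightarrow> {x, y} \<in> E \<and> is_walk E (y # ys)"
  by (auto simp: is_walk_def less_Suc_eq_0_disj)

lemma is_walk_mono: "is_walk E ps \<Longrightarrow> E \<subseteq> F \<Longrightarrow> is_walk F ps"
  unfolding is_walk_def by blast

lemma is_walk_take: "is_walk E ps \<Longrightarrow> 0 < n \<Longrightarrow> is_walk E (take n ps)"
  by (simp add: is_walk_def)

lemma is_walk_avoiding: "is_walk E ps \<Longrightarrow> a \<notin> set ps \<Longrightarrow> is_walk {e \<in> E. a \<notin> e} ps"
  unfolding is_walk_def by (metis (mono_tags, lifting) Suc_lessD insertE mem_Collect_eq nth_mem singletonD)

lemma is_walk_rev:
  assumes "is_walk E ps"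
  shows "is_walk E (rev ps)"
  unfolding is_walk_def
proof (intro conjI allI impI)
  show "rev ps \<noteq> []" using assms by (simp add: is_walk_def)
  fix i assume i: "Suc i < length (rev ps)"
  define j where "j = length ps - Suc (Suc i)"
  have "Suc j < length ps" "rev ps ! i = ps ! Suc j" "rev ps ! Suc i = ps ! j"
    using i by (auto simp: j_def rev_nth Suc_diff_Suc)
  then show "{rev ps ! i, rev ps ! Suc i} \<in> E"
    using is_walk_edge[OF assms] by (simp add: insert_commute)
qed

lemma set_walk_subset:
  assumes "is_walk E ps"
  shows "set ps \<subseteq> insert (hd ps) (\<Union>E)"
proof
  fix z assume "z \<in> set ps"
  then obtain i where i: "i < length ps" "ps ! i = z" by (auto simp: in_set_conv_nth)
  show "z \<in> insert (hd ps) (\<Union>E)"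
  proof (cases i)
    case 0
    then show ?thesis using i by (simp add: hd_conv_nth)
  next
    case (Suc j)
    then have "{ps ! j, z} \<in> E" using is_walk_edge[OF assms] i by fastforce
    then show ?thesis by blast
  qed
qed

lemma path_length_Cons_Cons: "path_length l (x # y # ys) = l {x, y} + path_length l (y # ys)"
  unfolding path_length_def by (simp del: sum.lessThan_Suc add: sum.lessThan_Suc_shift)

lemma path_length_rev: "path_length l (rev ps) = path_length l ps"
proof -
  have "path_length l (rev ps) = (\<Sum>i<length ps - 1. l {ps ! (length ps - 1 - Suc i), ps ! Suc (length ps - 1 - Suc i)})"
    unfolding path_length_def by (intro sum.cong) (auto simp: rev_nth insert_commute Suc_diff_Suc)
  also have "\<dots> = path_length l ps"
    unfolding path_length_def by (rule sum.nat_diff_reindex)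
  finally show ?thesis .
qed

lemma is_path_rev: "is_path E ps x y \<Longrightarrow> is_path E (rev ps) y x"
  by (auto simp: is_path_def is_walk_rev hd_rev last_rev)

lemma is_path_same_ends: "is_path E ps x x \<Longrightarrow> ps = [x]"
  unfolding is_path_def is_walk_def
  by (metis distinct.simps(2) distinct_butlast hd_Cons_tl last_ConsR last_in_set
      append_butlast_last_id distinct_append)

lemma path_in_no_edges: "is_path {} ps x y \<Longrightarrow> ps = [x]"
  by (cases ps rule: remdups_adj.cases) (auto simp: is_path_def is_walk_def)

lemma is_path_mono: "is_path E ps x y \<Longrightarrow> E \<subseteq> F \<Longrightarrow> is_path F ps x y"
  unfolding is_path_def using is_walk_mono by blast

lemma is_path_Cons:
  assumes "is_path E ps b y" "{a, b} \<in> E" "a \<notin> set ps"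
  shows "is_path E (a # ps) a y" and "path_length l (a # ps) = l {a, b} + path_length l ps"
proof -
  obtain rest where "ps = b # rest"
    using assms(1) by (cases ps) (auto simp: is_path_def is_walk_def)
  then show "is_path E (a # ps) a y" "path_length l (a # ps) = l {a, b} + path_length l ps"
    using assms by (simp_all add: is_path_def is_walk_Cons_Cons path_length_Cons_Cons)
qed

lemma tree_dist_self: "tree_dist E l x x = 0"
  unfolding tree_dist_def
proof (rule the_equality)
  show "\<exists>ps. is_path E ps x x \<and> 0 = path_length l ps"
    by (intro exI[of _ "[x]"]) (simp add: is_path_def is_walk_def path_length_def)
  show "r = 0" if "\<exists>ps. is_path E ps x x \<and> r = path_length l ps" for r
    using that is_path_same_ends by (fastforce simp: path_length_def)
qed

lemma tree_dist_commute: "tree_dist E l x y = tree_dist E l y x"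
proof -
  have "\<exists>qs. is_path E qs y x \<and> r = path_length l qs"
    if "\<exists>ps. is_path E ps x y \<and> r = path_length l ps" for x y r
    using that is_path_rev path_length_rev by metis
  then show ?thesis
    unfolding tree_dist_def by metis
qed

section \<open>Leaves of weighted trees\<close>

lemma weighted_tree_edgeE:
  assumes "weighted_tree X E l" "e \<in> E"
  obtains u v where "u \<noteq> v" "u \<in> X" "v \<in> X" "e = {u, v}"
  using assms unfolding weighted_tree_def by blast

lemma weighted_tree_pathE:
  assumes "weighted_tree X E l" "x \<in> X" "y \<in> X"
  obtains ps where "is_path E ps x y"
  using assms unfolding weighted_tree_def by blast

lemma weighted_tree_Union_edges: "weighted_tree X E l \<Longrightarrow> \<Union>E \<subseteq> X"
  by (blast elim: weighted_tree_edgeE)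

lemma weighted_tree_finite_edges:
  assumes "weighted_tree X E l"
  shows "finite E"
proof (rule finite_subset)
  show "E \<subseteq> Pow X" using weighted_tree_Union_edges[OF assms] by blast
  show "finite (Pow X)" using assms by (simp add: weighted_tree_def)
qed

lemma weighted_tree_set_path:
  assumes "weighted_tree X E l" "is_path E ps x y" "x \<in> X"
  shows "set ps \<subseteq> X"
  using set_walk_subset[of E ps] weighted_tree_Union_edges[OF assms(1)] assms(2,3)
  unfolding is_path_def by blast

lemma weighted_tree_no_loop: "weighted_tree X E l \<Longrightarrow> {x} \<notin> E"
  by (metis weighted_tree_edgeE doubleton_eq_iff insert_absorb2)

lemma acyclic_no_chord:
  assumes "\<not> has_cycle E" "is_walk E ps" "distinct ps" "j < length ps" "{ps ! j, hd ps} \<in> E"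
  shows "j \<le> 1"
proof (rule ccontr)
  assume "\<not> j \<le> 1"
  let ?cs = "take (Suc j) ps"
  have "last ?cs = ps ! j"
    using assms(4) by (simp add: take_Suc_conv_app_nth)
  then have "{last ?cs, hd ?cs} \<in> E"
    using assms(5) by (simp add: hd_take)
  moreover have "3 \<le> length ?cs" "distinct ?cs" "is_walk E ?cs"
    using assms \<open>\<not> j \<le> 1\<close> by (simp_all add: is_walk_take)
  ultimately have "has_cycle E"
    unfolding has_cycle_def by blast
  with assms(1) show False ..
qed

locale tree_leaf =
  fixes X :: "'a set" and E :: "'a set set" and l :: "'a set \<Rightarrow> real" and a b :: 'a
  assumes tree: "weighted_tree X E l" and leaf_in: "a \<in> X" and leaf_neq: "a \<noteq> b"
    and leaf_edges: "{e \<in> E. a \<in> e} = {{a, b}}"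
begin

lemma edge_at_leaf_iff: "e \<in> E \<and> a \<in> e \<longleftrightarrow> e = {a, b}"
  using leaf_edges[unfolded set_eq_iff] by blast

lemma leaf_edge: "{a, b} \<in> E"
  using edge_at_leaf_iff[of "{a, b}"] by simp

lemma neighbour_in: "b \<in> X"
  using weighted_tree_Union_edges[OF tree] leaf_edge by blast

lemma leaf_neighbour: "{a, c} \<in> E \<Longrightarrow> c = b"
  using edge_at_leaf_iff[of "{a, c}"] leaf_neq by (simp add: doubleton_eq_iff)

lemma edges_remove_leaf: "E - {{a, b}} = {e \<in> E. a \<notin> e}"
  using edge_at_leaf_iff by blast

lemma path_avoids_leaf:
  assumes p: "is_path E ps x y" and "x \<noteq> a" "y \<noteq> a"
  shows "a \<notin> set ps"
proof
  assume "a \<in> set ps"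
  then obtain i where i: "i < length ps" "ps ! i = a" by (auto simp: in_set_conv_nth)
  have walk: "is_walk E ps" and dist: "distinct ps"
    and ends: "ps ! 0 = x" "ps ! (length ps - 1) = y"
    using p by (auto simp: is_path_def is_walk_def hd_conv_nth last_conv_nth)
  have "i \<noteq> 0" "i \<noteq> length ps - 1"
    using i(2) ends assms(2,3) by metis+
  then obtain k where k: "i = Suc k" and "Suc i < length ps"
    using i(1) by (cases i) auto
  then have "{a, ps ! k} \<in> E" "{a, ps ! Suc i} \<in> E"
    using is_walk_edge[OF walk, of k] is_walk_edge[OF walk, of i] i by (simp_all add: insert_commute)
  then have "ps ! k = ps ! Suc i"
    by (metis leaf_neighbour)
  then show False
    using dist k \<open>Suc i < length ps\<close> by (simp add: nth_eq_iff_index_eq)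
qed

lemma path_from_leaf:
  assumes p: "is_path E ps a y" and "y \<noteq> a"
  obtains qs where "ps = a # qs" "is_path (E - {{a, b}}) qs b y"
proof -
  obtain c qs where ps: "ps = a # c # qs"
    using p assms(2) by (cases ps rule: remdups_adj.cases) (auto simp: is_path_def is_walk_def)
  have "{a, c} \<in> E" and walk: "is_walk E (c # qs)" and "a \<notin> set (c # qs)"
    using p by (auto simp: ps is_path_def is_walk_Cons_Cons)
  then have "c = b" "is_walk (E - {{a, b}}) (c # qs)"
    using leaf_neighbour is_walk_avoiding[OF walk] edges_remove_leaf by simp_all
  then show ?thesis
    using that p ps by (auto simp: is_path_def)
qed

lemma weighted_tree_remove_leaf: "weighted_tree (X - {a}) (E - {{a, b}}) l"
  unfolding weighted_tree_def
proof (intro conjI ballI)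
  show "finite (X - {a})"
    using tree by (simp add: weighted_tree_def)
  show "X - {a} \<noteq> {}"
    using neighbour_in leaf_neq by blast
  show "\<not> has_cycle (E - {{a, b}})"
    using tree unfolding weighted_tree_def has_cycle_def by (blast dest: is_walk_mono[OF _ Diff_subset])
next
  fix e assume e: "e \<in> E - {{a, b}}"
  then show "l e > 0"
    using tree by (simp add: weighted_tree_def)
  from e have "e \<in> E" "a \<notin> e"
    using edges_remove_leaf by blast+
  then show "\<exists>x y. x \<noteq> y \<and> x \<in> X - {a} \<and> y \<in> X - {a} \<and> e = {x, y}"
    by (elim weighted_tree_edgeE[OF tree]) blast
next
  fix x y assume xy: "x \<in> X - {a}" "y \<in> X - {a}"
  then obtain ps where p: "is_path E ps x y"
    using weighted_tree_pathE[OF tree] by blast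
  moreover have "a \<notin> set ps"
    using path_avoids_leaf[OF p] xy by blast
  ultimately have "is_walk {e \<in> E. a \<notin> e} ps"
    using is_walk_avoiding[of E ps a] by (simp add: is_path_def)
  then have "is_path (E - {{a, b}}) ps x y"
    using p by (simp add: is_path_def edges_remove_leaf)
  then show "\<exists>ps. is_path (E - {{a, b}}) ps x y" ..
qed

end

lemma weighted_tree_has_leaf:
  assumes tree: "weighted_tree X E l" and "2 \<le> card X"
  obtains a b where "tree_leaf X E l a b"
proof -
  define W where "W ps \<longleftrightarrow> is_walk E ps \<and> distinct ps \<and> set ps \<subseteq> X" for ps
  have fin: "finite X" using tree by (simp add: weighted_tree_def)
  have W_bounded: "length ps < Suc (card X)" if "W ps" for ps
    using that fin card_mono distinct_card unfolding W_def by (metis less_Suc_eq_le)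
  obtain x y where "x \<in> X" "y \<in> X" "x \<noteq> y"
    using assms(2) fin card_le_Suc0_iff_eq[of X] by auto
  then obtain p where p: "is_path E p x y"
    using weighted_tree_pathE[OF tree] by blast
  then have "W p"
    using weighted_tree_set_path[OF tree p \<open>x \<in> X\<close>] by (simp add: W_def is_path_def)
  have "2 \<le> length p"
    using p \<open>x \<noteq> y\<close> by (cases p rule: remdups_adj.cases) (auto simp: is_path_def is_walk_def)
  obtain ps where "W ps" and longest: "\<And>qs. W qs \<Longrightarrow> length qs \<le> length ps"
    using Lattices_Big.ex_has_greatest_nat[of W p length, OF \<open>W p\<close>] W_bounded by blast
  moreover obtain a b rest where ps: "ps = a # b # rest"
    using longest[OF \<open>W p\<close>] \<open>2 \<le> length p\<close> by (cases ps rule: remdups_adj.cases) auto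
  ultimately have walk: "is_walk E ps" "distinct ps" and "{a, b} \<in> E" "a \<in> X" "a \<noteq> b"
    by (auto simp: W_def is_walk_Cons_Cons)
  have "c = b" if "{a, c} \<in> E" for c
  proof (cases "c \<in> set ps")
    case True
    then obtain j where j: "j < length ps" "ps ! j = c" by (auto simp: in_set_conv_nth)
    moreover have "j \<le> 1"
      using acyclic_no_chord[OF _ walk j(1)] tree that j(2)
      by (simp add: weighted_tree_def ps insert_commute)
    moreover have "c \<noteq> a"
      using that weighted_tree_no_loop[OF tree] by auto
    ultimately show ?thesis
      by (auto simp: ps le_Suc_eq)
  next
    case False
    have "c \<in> X"
      using that weighted_tree_Union_edges[OF tree] by blast
    then have "W (c # ps)"
      using \<open>W ps\<close> that False by (simp add: W_def ps is_walk_Cons_Cons insert_commute)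
    then show ?thesis using longest by fastforce
  qed
  moreover have "\<exists>c. e = {a, c}" if "e \<in> E" "a \<in> e" for e
    using that by (elim weighted_tree_edgeE[OF tree]) auto
  ultimately have "{e \<in> E. a \<in> e} = {{a, b}}"
    using \<open>{a, b} \<in> E\<close> by blast
  then show ?thesis
    using that tree \<open>a \<in> X\<close> \<open>a \<noteq> b\<close> by (simp add: tree_leaf_def)
qed

lemma weighted_tree_induct [consumes 1, case_names singleton leaf]:
  assumes "weighted_tree X E l"
    and singleton: "\<And>x. P {x} {}"
    and leaf: "\<And>X E a b. tree_leaf X E l a b \<Longrightarrow> P (X - {a}) (E - {{a, b}}) \<Longrightarrow> P X E"
  shows "P X E"
  using assms(1)
proof (induction "card X" arbitrary: X E rule: less_induct)
  case less
  have fin: "finite X" and "X \<noteq> {}"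
    using less.prems by (simp_all add: weighted_tree_def)
  show ?case
  proof (cases "2 \<le> card X")
    case True
    then obtain a b where ab: "tree_leaf X E l a b"
      using weighted_tree_has_leaf[OF less.prems] by blast
    have "card (X - {a}) < card X"
      using card_Diff1_less[OF fin tree_leaf.leaf_in[OF ab]] .
    then have "P (X - {a}) (E - {{a, b}})"
      using less.hyps tree_leaf.weighted_tree_remove_leaf[OF ab] by blast
    then show ?thesis
      using leaf[OF ab] by blast
  next
    case False
    moreover have "card X \<noteq> 0"
      using fin \<open>X \<noteq> {}\<close> by simp
    ultimately have "card X = 1"
      by linarith
    then obtain x where X: "X = {x}"
      by (rule card_1_singletonE)
    have "E = {}"
    proof (rule equals0I)
      fix e assume "e \<in> E"
      then show False
        using X by (elim weighted_tree_edgeE[OF less.prems]) auto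
    qed
    with X show ?thesis
      using singleton by blast
  qed
qed

lemma weighted_tree_unique_path:
  assumes "weighted_tree X E l" "is_path E ps x y" "is_path E qs x y"
  shows "ps = qs"
  using assms
proof (induction arbitrary: ps qs x y rule: weighted_tree_induct)
  case (singleton z)
  then show ?case by (metis path_in_no_edges)
next
  case (leaf X E a b)
  interpret tree_leaf X E l a b by fact
  have from_leaf: "ps = qs" if p: "is_path E ps a y" "is_path E qs a y" for ps qs y
  proof (cases "y = a")
    case True
    then show ?thesis using p is_path_same_ends by metis
  next
    case False
    obtain ps' where "ps = a # ps'" "is_path (E - {{a, b}}) ps' b y"
      using path_from_leaf[OF p(1) False] .
    moreover obtain qs' where "qs = a # qs'" "is_path (E - {{a, b}}) qs' b y"
      using path_from_leaf[OF p(2) False] .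
    ultimately show ?thesis using leaf.IH by blast
  qed
  consider "x = a" | "y = a" | "x \<noteq> a" "y \<noteq> a" by blast
  then show ?case
  proof cases
    case 1
    then show ?thesis using from_leaf leaf.prems by blast
  next
    case 2
    then show ?thesis using from_leaf[OF is_path_rev is_path_rev] leaf.prems by blast
  next
    case 3
    then have "a \<notin> set ps" "a \<notin> set qs"
      using leaf.prems path_avoids_leaf by blast+
    then have "is_path (E - {{a, b}}) ps x y" "is_path (E - {{a, b}}) qs x y"
      using leaf.prems is_walk_avoiding[of E ps a] is_walk_avoiding[of E qs a]
      by (simp_all add: is_path_def edges_remove_leaf)
    then show ?thesis using leaf.IH by blast
  qed
qed

lemma tree_dist_eq_path_length:
  assumes "weighted_tree X E l" "is_path E ps x y"
  shows "tree_dist E l x y = path_length l ps"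
  unfolding tree_dist_def
proof (rule the_equality)
  show "\<exists>qs. is_path E qs x y \<and> path_length l ps = path_length l qs"
    using assms(2) by blast
  show "r = path_length l ps" if "\<exists>qs. is_path E qs x y \<and> r = path_length l qs" for r
    using that weighted_tree_unique_path[OF assms] by blast
qed

section \<open>Weighted trees as iterated pendant extensions\<close>

definition tree_weight :: "'a set set \<Rightarrow> ('a set \<Rightarrow> real) \<Rightarrow> 'a \<Rightarrow> real" where
  "tree_weight E l x = (\<Sum>e\<in>{e \<in> E. x \<in> e}. 1 / (1 + exp (- l e))) - (real (degree E x) - 1)"

context tree_leaf
begin

lemma leaf_edge_pos: "l {a, b} > 0"
  using tree leaf_edge by (simp add: weighted_tree_def)

lemma tree_dist_remove_leaf:
  assumes "x \<in> X - {a}" "y \<in> X - {a}"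
  shows "tree_dist (E - {{a, b}}) l x y = tree_dist E l x y"
proof -
  obtain ps where p: "is_path (E - {{a, b}}) ps x y"
    using weighted_tree_pathE[OF weighted_tree_remove_leaf assms] .
  then show ?thesis
    using tree_dist_eq_path_length[OF weighted_tree_remove_leaf p]
      tree_dist_eq_path_length[OF tree is_path_mono[OF p Diff_subset]] by simp
qed

lemma tree_dist_from_leaf:
  assumes "y \<in> X - {a}"
  shows "tree_dist E l a y = l {a, b} + tree_dist E l b y"
proof -
  have b: "b \<in> X - {a}"
    using neighbour_in leaf_neq by blast
  obtain ps where p: "is_path E ps b y" and "a \<notin> set ps"
  proof -
    obtain ps where p': "is_path (E - {{a, b}}) ps b y"
      using weighted_tree_pathE[OF weighted_tree_remove_leaf b assms] .
    have "set ps \<subseteq> X - {a}"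
      using weighted_tree_set_path[OF weighted_tree_remove_leaf p' b] .
    then show ?thesis
      using that is_path_mono[OF p' Diff_subset] by blast
  qed
  then show ?thesis
    using is_path_Cons[OF p leaf_edge] tree_dist_eq_path_length[OF tree] by metis
qed

lemma tree_weight_remove_leaf:
  "tree_weight E l = pendant_weight (tree_weight (E - {{a, b}}) l) a b (l {a, b})"
proof
  fix y
  let ?S = "{e \<in> E - {{a, b}}. y \<in> e}"
  have fin: "finite ?S"
    using weighted_tree_finite_edges[OF tree] by simp
  consider "y = a" | "y = b" | "y \<noteq> a" "y \<noteq> b" by blast
  then show "tree_weight E l y = pendant_weight (tree_weight (E - {{a, b}}) l) a b (l {a, b}) y"
  proof cases
    case 1
    then show ?thesis by (simp add: tree_weight_def degree_def pendant_weight_def leaf_edges)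
  next
    case 2
    then have "{e \<in> E. y \<in> e} = insert {a, b} ?S" "{a, b} \<notin> ?S"
      using leaf_edge by auto
    then show ?thesis
      using 2 fin leaf_neq by (simp add: tree_weight_def degree_def pendant_weight_def)
  next
    case 3
    then have "{e \<in> E. y \<in> e} = ?S" by auto
    then show ?thesis
      using 3 by (simp add: tree_weight_def degree_def pendant_weight_def)
  qed
qed

sublocale pendant_point "X - {a}" "tree_dist E l" a b "l {a, b}"
proof
  show "finite (X - {a})"
    using tree by (simp add: weighted_tree_def)
  show "a \<notin> X - {a}" "b \<in> X - {a}"
    using neighbour_in leaf_neq by auto
  show "tree_dist E l a a = 0" "tree_dist E l b b = 0"
    by (simp_all add: tree_dist_self)
  show "tree_dist E l a y = l {a, b} + tree_dist E l b y" if "y \<in> X - {a}" for y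
    using tree_dist_from_leaf[OF that] .
  show "tree_dist E l y a = tree_dist E l y b + l {a, b}" if "y \<in> X - {a}" for y
    using tree_dist_from_leaf[OF that] by (simp add: tree_dist_commute)
qed

end

lemma weighted_tree_weighting:
  "weighted_tree X E l \<Longrightarrow> is_weighting X (tree_dist E l) (tree_weight E l)"
proof (induction rule: weighted_tree_induct)
  case (singleton x)
  then show ?case by (simp add: is_weighting_def tree_dist_self tree_weight_def degree_def)
next
  case (leaf X E a b)
  interpret tree_leaf X E l a b by fact
  have "is_weighting (X - {a}) (tree_dist E l) (tree_weight (E - {{a, b}}) l)"
    using leaf.IH by (rule is_weighting_cong) (rule tree_dist_remove_leaf)
  then show ?case
    using weighting_insert by (simp add: tree_weight_remove_leaf insert_absorb[OF leaf_in])
qed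

lemma weighted_tree_similarity_nonsingular:
  "weighted_tree X E l \<Longrightarrow> similarity_nonsingular X (tree_dist E l)"
proof (induction rule: weighted_tree_induct)
  case (singleton x)
  then show ?case by (simp add: similarity_nonsingular_def tree_dist_self)
next
  case (leaf X E a b)
  interpret tree_leaf X E l a b by fact
  have "similarity_nonsingular (X - {a}) (tree_dist E l)"
    using leaf.IH by (rule similarity_nonsingular_cong) (rule tree_dist_remove_leaf)
  then show ?case
    using similarity_nonsingular_insert leaf_edge_pos insert_absorb[OF leaf_in] by simp
qed

lemma weighted_tree_l2_squared_embeddable:
  "weighted_tree X E l \<Longrightarrow> l2_squared_embeddable X (tree_dist E l)"
proof (induction rule: weighted_tree_induct)
  case (singleton x)
  then show ?case by (simp add: l2_squared_embeddable_def tree_dist_self)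
next
  case (leaf X E a b)
  interpret tree_leaf X E l a b by fact
  have "l2_squared_embeddable (X - {a}) (tree_dist E l)"
    using leaf.IH by (rule l2_squared_embeddable_cong) (rule tree_dist_remove_leaf)
  then show ?case
    using l2_squared_embeddable_insert leaf_edge_pos insert_absorb[OF leaf_in] by simp
qed

lemma weighted_tree_magnitude:
  "weighted_tree X E l \<Longrightarrow> (\<Sum>x\<in>X. tree_weight E l x) = 1 + (\<Sum>e\<in>E. tanh (l e / 2))"
proof (induction rule: weighted_tree_induct)
  case (singleton x)
  then show ?case by (simp add: tree_weight_def degree_def)
next
  case (leaf X E a b)
  interpret tree_leaf X E l a b by fact
  have "(\<Sum>e\<in>E. tanh (l e / 2)) = tanh (l {a, b} / 2) + (\<Sum>e\<in>E - {{a, b}}. tanh (l e / 2))"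
    using sum.remove[OF weighted_tree_finite_edges[OF tree] leaf_edge] .
  then show ?case
    using leaf.IH magnitude_insert by (simp add: tree_weight_remove_leaf insert_absorb[OF leaf_in])
qed

theorem proposition3p2:
  fixes X :: "'a set" and E :: "'a set set" and l :: "'a set \<Rightarrow> real"
  assumes "weighted_tree X E l"
  defines "d \<equiv> tree_dist E l"
  defines "w \<equiv> (\<lambda>x. (\<Sum>e\<in>{e \<in> E. x \<in> e}. 1 / (1 + exp (- l e))) - (real (degree E x) - 1))"
  shows "negative_type X d
    \<and> is_weighting X d w
    \<and> (\<forall>v. is_weighting X d v \<longrightarrow> (\<forall>x\<in>X. v x = w x))
    \<and> (\<Sum>x\<in>X. w x) = 1 + (\<Sum>e\<in>E. tanh (l e / 2))"
proof -
  have w: "w = tree_weight E l"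
    by (simp add: w_def tree_weight_def fun_eq_iff)
  have embeddable: "l2_squared_embeddable X d"
    unfolding d_def by (rule weighted_tree_l2_squared_embeddable[OF assms(1)])
  have nonsingular: "similarity_nonsingular X d"
    unfolding d_def by (rule weighted_tree_similarity_nonsingular[OF assms(1)])
  have weighting: "is_weighting X d w"
    unfolding d_def w by (rule weighted_tree_weighting[OF assms(1)])
  have magnitude: "(\<Sum>x\<in>X. w x) = 1 + (\<Sum>e\<in>E. tanh (l e / 2))"
    unfolding w by (rule weighted_tree_magnitude[OF assms(1)])
  show ?thesis
    using negative_type_if_l2_squared_embeddable[OF embeddable] weighting
      weighting_unique[OF nonsingular _ weighting] magnitude by blast
qed

end
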